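(* Let $G=(V,E)$ be a simple connected graph on $n\ge2$ nodes with all degrees at most $D$, let $e_1\in E$, and let $w:E\to\mathbb{R}_+$. Then there exist a spanning tree $F$ of $G$ with $e_1\in E(F)$ and integers $(k_e: e\in E(F))$ such that $k_{e_1}=1$, $k_e\le D$ for all $e\in E(F)$, $\sum_{e\in E(F)}k_e=|E|$, and $$\sum_{e\in E}w(e)\le\sum_{e\in E(F)}k_e\,w(e).$$ *)

theory Defs
  imports Complex_Main
begin

definition simple_graph :: "'a set \<Rightarrow> 'a set set \<Rightarrow> bool" where
  "simple_graph V E \<longleftrightarrow> finite V \<and>
     (\<forall>e\<in>E. \<exists>u v. e = {u, v} \<and> u \<noteq> v \<and> u \<in> V \<and> v \<in> V)"

fun walk :: "'a set set \<Rightarrow> 'a list \<Rightarrow> bool" where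
  "walk E [] = False"
| "walk E [v] = True"
| "walk E (u # v # vs) \<longleftrightarrow> {u, v} \<in> E \<and> walk E (v # vs)"

definition connected_graph :: "'a set \<Rightarrow> 'a set set \<Rightarrow> bool" where
  "connected_graph V E \<longleftrightarrow>
     (\<forall>u\<in>V. \<forall>v\<in>V. \<exists>p. walk E p \<and> set p \<subseteq> V \<and> hd p = u \<and> last p = v)"

definition has_cycle :: "'a set set \<Rightarrow> bool" where
  "has_cycle E \<longleftrightarrow> (\<exists>p. length p \<ge> 3 \<and> distinct p \<and> walk E p \<and> {last p, hd p} \<in> E)"

definition degree :: "'a set set \<Rightarrow> 'a \<Rightarrow> nat" where
  "degree E v = card {e\<in>E. v \<in> e}"

definition spanning_tree :: "'a set \<Rightarrow> 'a set set \<Rightarrow> 'a set set \<Rightarrow> bool" where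
  "spanning_tree V E F \<longleftrightarrow> F \<subseteq> E \<and> connected_graph V F \<and> \<not> has_cycle F"

end

theory Submission imports Defs begin

text \<open>
  Grow a tree from the edge e1 in the manner of Prim's algorithm, but always attach the
  new vertex v through the heaviest edge f leaving the current vertex set S. Give f the
  charge k f = number of edges between v and S: these edges all leave S, so their total
  weight is at most k f * w f, and k f is at most the degree of v, hence at most D. Since
  every edge of the graph becomes induced exactly when its second endpoint is added,
  the charges sum to |E| and the charged weights dominate the total weight. The first
  edge e1 is the only edge between its endpoints, so it gets charge 1.
\<close>

lemma walk_nonempty: "walk E p \<Longrightarrow> p \<noteq> []"
  by (cases p) auto

lemma walk_mono: "walk E p \<Longrightarrow> E \<subseteq> E' \<Longrightarrow> walk E' p"
  by (induction E p rule: walk.induct) auto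

lemma walk_Cons: "walk E p \<Longrightarrow> {v, hd p} \<in> E \<Longrightarrow> walk E (v # p)"
  by (cases p) auto

lemma walk_snoc: "walk E p \<Longrightarrow> {last p, v} \<in> E \<Longrightarrow> walk E (p @ [v])"
  by (induction E p rule: walk.induct) auto

lemma walk_leaves_set:
  "walk E p \<Longrightarrow> hd p \<in> S \<Longrightarrow> last p \<notin> S \<Longrightarrow> \<exists>x y. {x, y} \<in> E \<and> x \<in> S \<and> y \<notin> S"
  by (induction E p rule: walk.induct) auto

lemma walk_avoiding_edge:
  "walk (insert f F) p \<Longrightarrow> v \<in> f \<Longrightarrow> v \<notin> set p \<Longrightarrow> walk F p"
  by (induction "insert f F" p rule: walk.induct) auto

definition cycle_walk :: "'a set set \<Rightarrow> 'a list \<Rightarrow> bool" where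
  "cycle_walk E p \<longleftrightarrow> length p \<ge> 3 \<and> distinct p \<and> walk E p \<and> {last p, hd p} \<in> E"

lemma has_cycle_iff_cycle_walk: "has_cycle E \<longleftrightarrow> (\<exists>p. cycle_walk E p)"
  unfolding has_cycle_def cycle_walk_def ..

lemma cycle_walk_rotate1:
  assumes "cycle_walk E p"
  shows "cycle_walk E (rotate1 p)"
proof -
  obtain x y ys where p: "p = x # y # ys"
    using assms unfolding cycle_walk_def by (cases p; cases "tl p") auto
  have "walk E (y # ys)" "{last (y # ys), x} \<in> E" and first_edge: "{x, y} \<in> E"
    using assms unfolding cycle_walk_def p by auto
  then have "walk E (rotate1 p)"
    unfolding p using walk_snoc[of E "y # ys" x] by simp
  moreover have "{last (rotate1 p), hd (rotate1 p)} \<in> E"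
    using first_edge unfolding p by simp
  moreover have "length (rotate1 p) \<ge> 3" "distinct (rotate1 p)"
    using assms unfolding cycle_walk_def by simp_all
  ultimately show ?thesis
    unfolding cycle_walk_def by blast
qed

lemma cycle_walk_rotate: "cycle_walk E p \<Longrightarrow> cycle_walk E (rotate n p)"
  by (induction n) (auto intro: cycle_walk_rotate1)

lemma cycle_walk_through:
  assumes "cycle_walk E p" "v \<in> set p"
  obtains y r where "cycle_walk E (v # y # r)"
proof -
  obtain xs ys where "p = xs @ v # ys"
    using assms(2) by (meson split_list)
  then have "rotate (length xs) p = v # ys @ xs"
    by (simp add: rotate_append)
  then have "cycle_walk E (v # ys @ xs)"
    using cycle_walk_rotate[OF assms(1)] by metis
  then show ?thesis
    using that unfolding cycle_walk_def by (cases "ys @ xs") auto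
qed

lemma not_has_cycle_insert_pendant:
  assumes acyclic: "\<not> has_cycle F" and fresh: "v \<notin> \<Union>F"
  shows "\<not> has_cycle (insert {u, v} F)"
proof
  let ?F = "insert {u, v} F"
  have neighbour: "x = u" if "{x, v} \<in> ?F" "x \<noteq> v" for x
    using that fresh by (auto simp: doubleton_eq_iff)
  assume "has_cycle ?F"
  then obtain p where p: "cycle_walk ?F p"
    unfolding has_cycle_iff_cycle_walk by blast
  show False
  proof (cases "v \<in> set p")
    case False
    have "p \<noteq> []" using p unfolding cycle_walk_def by auto
    then have "{last p, hd p} \<noteq> {u, v}" using False by (auto simp: doubleton_eq_iff)
    then have "cycle_walk F p"
      using p False walk_avoiding_edge[of "{u, v}" F p v] unfolding cycle_walk_def by auto
    then show False using acyclic unfolding has_cycle_iff_cycle_walk by blast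
  next
    case True
    \<comment> \<open>Rotate the cycle to start at v: both neighbours of v on it would have to be u.\<close>
    then obtain y r where c: "cycle_walk ?F (v # y # r)"
      using cycle_walk_through[OF p] by blast
    then have "r \<noteq> []" "distinct (v # y # r)"
      unfolding cycle_walk_def by auto
    then have r: "r \<noteq> []" "y \<noteq> v" "last r \<noteq> v" "y \<noteq> last r"
      using last_in_set[of r] by auto
    have "{v, y} \<in> ?F"
      using c unfolding cycle_walk_def by simp
    then have "y = u"
      using neighbour[of y] r(2) by (simp add: insert_commute)
    have "{last r, v} \<in> ?F"
      using c r(1) unfolding cycle_walk_def by simp
    then have "last r = u"
      using neighbour r(3) by blast
    then show False
      using \<open>y = u\<close> r(4) by simp
  qed
qed

lemma connected_graph_insert_pendant:
  assumes conn: "connected_graph S F" and "u \<in> S"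
  shows "connected_graph (insert v S) (insert {u, v} F)"
  unfolding connected_graph_def
proof (intro ballI)
  let ?F = "insert {u, v} F"
  have path: "\<exists>p. walk ?F p \<and> set p \<subseteq> S \<and> hd p = x \<and> last p = y" if "x \<in> S" "y \<in> S" for x y
    using conn that walk_mono[of F _ ?F] unfolding connected_graph_def by blast
  fix x y assume "x \<in> insert v S" "y \<in> insert v S"
  then consider "x = v" "y = v" | "x = v" "y \<in> S" | "x \<in> S" "y = v" | "x \<in> S" "y \<in> S"
    by blast
  then show "\<exists>p. walk ?F p \<and> set p \<subseteq> insert v S \<and> hd p = x \<and> last p = y"
  proof cases
    case 1
    then show ?thesis by (intro exI[of _ "[v]"]) auto
  next
    case 2
    with path \<open>u \<in> S\<close> obtain p where p: "walk ?F p" "set p \<subseteq> S" "hd p = u" "last p = y"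
      by blast
    then have "walk ?F (v # p)" by (intro walk_Cons) auto
    then show ?thesis using p 2 walk_nonempty[OF p(1)] by (intro exI[of _ "v # p"]) auto
  next
    case 3
    with path \<open>u \<in> S\<close> obtain p where p: "walk ?F p" "set p \<subseteq> S" "hd p = x" "last p = u"
      by blast
    then have "walk ?F (p @ [v])" by (intro walk_snoc) auto
    then show ?thesis using p 3 walk_nonempty[OF p(1)] by (intro exI[of _ "p @ [v]"]) auto
  next
    case 4
    then show ?thesis using path by blast
  qed
qed

definition induced_edges :: "'a set set \<Rightarrow> 'a set \<Rightarrow> 'a set set" where
  "induced_edges E S = {e\<in>E. e \<subseteq> S}"

lemma simple_graph_finite_edges:
  assumes "simple_graph V E"
  shows "finite E"
proof -
  have "E \<subseteq> Pow V" "finite V"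
    using assms unfolding simple_graph_def by auto
  then show ?thesis
    by (meson finite_Pow_iff finite_subset)
qed

lemma simple_graph_edge_subset: "simple_graph V E \<Longrightarrow> e \<in> E \<Longrightarrow> e \<subseteq> V"
  unfolding simple_graph_def by fastforce

lemma induced_edges_singleton: "simple_graph V E \<Longrightarrow> induced_edges E {a} = {}"
  unfolding simple_graph_def induced_edges_def by fastforce

lemma induced_edges_doubleton:
  assumes "simple_graph V E" "{a, b} \<in> E"
  shows "induced_edges E {a, b} = {{a, b}}"
proof -
  have "e = {a, b}" if "e \<in> E" "e \<subseteq> {a, b}" for e
  proof -
    obtain x y where "e = {x, y}" "x \<noteq> y"
      using assms(1) \<open>e \<in> E\<close> unfolding simple_graph_def by blast
    then show ?thesis
      using \<open>e \<subseteq> {a, b}\<close> by auto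
  qed
  then show ?thesis
    using assms(2) unfolding induced_edges_def by auto
qed

lemma induced_edges_vertices: "simple_graph V E \<Longrightarrow> induced_edges E V = E"
  unfolding induced_edges_def using simple_graph_edge_subset by blast

lemma induced_edges_insert_new:
  assumes "simple_graph V E" "v \<notin> S" "e \<in> induced_edges E (insert v S) - induced_edges E S"
  obtains x where "e = {x, v}" "x \<in> S"
proof -
  obtain x y where "e = {x, y}" "x \<noteq> y" "e \<in> E"
    using assms unfolding simple_graph_def induced_edges_def by blast
  then show ?thesis
    using assms that unfolding induced_edges_def by (auto simp: insert_commute)
qed

definition charged_tree ::
    "'a set set \<Rightarrow> nat \<Rightarrow> ('a set \<Rightarrow> real) \<Rightarrow> 'a set \<Rightarrow> 'a set set \<Rightarrow> ('a set \<Rightarrow> int) \<Rightarrow> bool"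
  where "charged_tree E D w S F k \<longleftrightarrow>
    F \<subseteq> induced_edges E S \<and> connected_graph S F \<and> \<not> has_cycle F \<and> (\<forall>e\<in>F. k e \<le> int D) \<and>
    (\<Sum>e\<in>F. k e) = int (card (induced_edges E S)) \<and>
    (\<Sum>e\<in>induced_edges E S. w e) \<le> (\<Sum>e\<in>F. real_of_int (k e) * w e)"

lemma charged_tree_singleton:
  assumes "simple_graph V E"
  shows "charged_tree E D w {a} {} k"
proof -
  have "connected_graph {a} {}"
    unfolding connected_graph_def by (intro ballI exI[of _ "[a]"]) auto
  moreover have "\<not> has_cycle {}"
    unfolding has_cycle_def by (auto elim: walk.elims)
  ultimately show ?thesis
    using induced_edges_singleton[OF assms] unfolding charged_tree_def by simp
qed

lemma charged_tree_insert_pendant: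
  fixes E :: "'a set set" and S :: "'a set" and v :: 'a
  defines "N \<equiv> induced_edges E (insert v S) - induced_edges E S"
  assumes "finite E" and tree: "charged_tree E D w S F k"
    and f: "{u, v} \<in> E" "u \<in> S" "v \<notin> S" and "degree E v \<le> D"
    and heaviest: "\<forall>e\<in>N. w e \<le> w {u, v}"
  shows "charged_tree E D w (insert v S) (insert {u, v} F) (k({u, v} := int (card N)))"
proof -
  let ?f = "{u, v}" and ?k = "k({u, v} := int (card N))"
  have F: "F \<subseteq> induced_edges E S" "connected_graph S F" "\<not> has_cycle F" "\<forall>e\<in>F. k e \<le> int D"
    and sum_k: "(\<Sum>e\<in>F. k e) = int (card (induced_edges E S))"
    and sum_w: "(\<Sum>e\<in>induced_edges E S. w e) \<le> (\<Sum>e\<in>F. real_of_int (k e) * w e)"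
    using tree unfolding charged_tree_def by auto
  have fin: "finite (induced_edges E (insert v S))" "finite F"
    using \<open>finite E\<close> F(1) unfolding induced_edges_def by (auto intro: finite_subset)
  have sub: "induced_edges E S \<subseteq> induced_edges E (insert v S)"
    unfolding induced_edges_def by auto
  have v_fresh: "v \<notin> \<Union>F" and "?f \<notin> F"
    using F(1) f(3) unfolding induced_edges_def by auto
  have sum_insert: "(\<Sum>e\<in>insert ?f F. g (?k e) e) = g (int (card N)) ?f + (\<Sum>e\<in>F. g (k e) e)"
    for g :: "int \<Rightarrow> 'a set \<Rightarrow> 'b::comm_monoid_add"
  proof -
    have "(\<Sum>e\<in>F. g (?k e) e) = (\<Sum>e\<in>F. g (k e) e)"
      using \<open>?f \<notin> F\<close> by (intro sum.cong) auto
    then show ?thesis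
      using fin(2) \<open>?f \<notin> F\<close> by simp
  qed
  have "N \<subseteq> {e\<in>E. v \<in> e}"
    unfolding N_def induced_edges_def by auto
  then have "card N \<le> D"
    using \<open>degree E v \<le> D\<close> \<open>finite E\<close> card_mono[of "{e\<in>E. v \<in> e}" N]
    unfolding degree_def by auto
  have "card (induced_edges E (insert v S)) = card N + card (induced_edges E S)"
    using fin(1) sub card_Diff_subset[of "induced_edges E S"] card_mono[OF fin(1) sub]
    unfolding N_def by (simp add: finite_subset)
  moreover have "(\<Sum>e\<in>induced_edges E (insert v S). w e) = (\<Sum>e\<in>N. w e) + (\<Sum>e\<in>induced_edges E S. w e)"
    using sum.subset_diff[OF sub fin(1)] unfolding N_def .
  moreover have "(\<Sum>e\<in>N. w e) \<le> real (card N) * w ?f"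
    using sum_bounded_above[of N w "w ?f"] heaviest by auto
  moreover have "insert ?f F \<subseteq> induced_edges E (insert v S)"
    using F(1) sub f unfolding induced_edges_def by auto
  ultimately show ?thesis
    unfolding charged_tree_def
    using connected_graph_insert_pendant[OF F(2) f(2)] not_has_cycle_insert_pendant[OF F(3) v_fresh]
      \<open>card N \<le> D\<close> F(4) \<open>?f \<notin> F\<close> sum_k sum_w
      sum_insert[of "\<lambda>c e. c"] sum_insert[of "\<lambda>c e. real_of_int c * w e"]
    by auto
qed

lemma charged_tree_grow:
  assumes sg: "simple_graph V E" and conn: "connected_graph V E" and deg: "\<forall>v\<in>V. degree E v \<le> D"
    and "charged_tree E D w S F k" "S \<subseteq> V" "S \<noteq> {}"
  shows "\<exists>F' k'. charged_tree E D w V F' k' \<and> F \<subseteq> F' \<and> (\<forall>e\<in>F. k' e = k e)"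
  using assms(4-6)
proof (induction "card (V - S)" arbitrary: S F k rule: less_induct)
  case less
  show ?case
  proof (cases "S = V")
    case True
    then show ?thesis using less.prems by blast
  next
    case False
    define C where "C = {{x, y} | x y. {x, y} \<in> E \<and> x \<in> S \<and> y \<notin> S}"
    obtain s t where "s \<in> S" "t \<in> V - S"
      using less.prems False by blast
    then obtain p where "walk E p" "hd p = s" "last p = t"
      using conn less.prems unfolding connected_graph_def by blast
    then have "C \<noteq> {}"
      using walk_leaves_set[of E p S] \<open>s \<in> S\<close> \<open>t \<in> V - S\<close> unfolding C_def by blast
    moreover have "finite C"
      using simple_graph_finite_edges[OF sg] unfolding C_def by (auto intro: finite_subset)
    ultimately have "Max (w ` C) \<in> w ` C" "\<forall>e\<in>C. w e \<le> Max (w ` C)"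
      by simp_all
    then obtain f where "f \<in> C" and f_max: "\<forall>e\<in>C. w e \<le> w f"
      by (metis imageE)
    then obtain u v where f: "f = {u, v}" "{u, v} \<in> E" "u \<in> S" "v \<notin> S"
      unfolding C_def by blast
    have "v \<in> V"
      using simple_graph_edge_subset[OF sg f(2)] by blast
    have heaviest: "\<forall>e\<in>induced_edges E (insert v S) - induced_edges E S. w e \<le> w {u, v}"
    proof
      fix e assume e: "e \<in> induced_edges E (insert v S) - induced_edges E S"
      then obtain x where "e = {x, v}" "x \<in> S"
        using induced_edges_insert_new[OF sg f(4)] by blast
      then have "e \<in> C"
        using e f(4) unfolding C_def induced_edges_def by blast
      then show "w e \<le> w {u, v}"
        using f_max f(1) by blast
    qed
    let ?k = "k({u, v} := int (card (induced_edges E (insert v S) - induced_edges E S)))"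
    have tree: "charged_tree E D w (insert v S) (insert {u, v} F) ?k"
      by (rule charged_tree_insert_pendant[OF simple_graph_finite_edges[OF sg] less.prems(1) f(2-4)])
        (use deg \<open>v \<in> V\<close> heaviest in auto)
    have "finite V"
      using sg unfolding simple_graph_def by blast
    then have "card (V - insert v S) < card (V - S)"
      using \<open>v \<in> V\<close> f(4) by (intro psubset_card_mono) auto
    then obtain F' k' where
      "charged_tree E D w V F' k'" "insert {u, v} F \<subseteq> F'" "\<forall>e\<in>insert {u, v} F. k' e = ?k e"
      using less.hyps[OF _ tree] less.prems(2) \<open>v \<in> V\<close> by auto
    moreover have "{u, v} \<notin> F"
      using less.prems(1) f(4) unfolding charged_tree_def induced_edges_def by blast
    ultimately show ?thesis
      by (intro exI[of _ F'] exI[of _ k']) auto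
  qed
qed

theorem lemma17:
  fixes V :: "'a set" and E :: "'a set set" and D :: nat
    and e1 :: "'a set" and w :: "'a set \<Rightarrow> real"
  assumes "simple_graph V E"
    and "connected_graph V E"
    and "card V \<ge> 2"
    and "\<forall>v\<in>V. degree E v \<le> D"
    and "e1 \<in> E"
    and "\<forall>e\<in>E. w e > 0"
  shows "\<exists>F (k :: 'a set \<Rightarrow> int).
           spanning_tree V E F \<and> e1 \<in> F \<and> k e1 = 1 \<and>
           (\<forall>e\<in>F. k e \<le> int D) \<and>
           (\<Sum>e\<in>F. k e) = int (card E) \<and>
           (\<Sum>e\<in>E. w e) \<le> (\<Sum>e\<in>F. real_of_int (k e) * w e)"
proof -
  obtain a b where e1: "e1 = {a, b}" "a \<in> V" "b \<in> V"
    using assms(1,5) unfolding simple_graph_def by blast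
  let ?N = "induced_edges E (insert b {a}) - induced_edges E {a}"
  have N: "?N = {e1}"
    using induced_edges_doubleton[OF assms(1)] induced_edges_singleton[OF assms(1)] assms(5) e1(1)
    by (simp add: insert_commute)
  have "charged_tree E D w (insert b {a}) (insert {a, b} {}) ((\<lambda>_. 0)({a, b} := int (card ?N)))"
    by (rule charged_tree_insert_pendant[OF simple_graph_finite_edges[OF assms(1)]
        charged_tree_singleton[OF assms(1)]]) (use assms(4,5) e1 N in auto)
  then have "charged_tree E D w {a, b} {e1} ((\<lambda>_. 0)(e1 := 1))"
    using N e1(1) by (simp add: insert_commute)
  then obtain F k where "charged_tree E D w V F k" "{e1} \<subseteq> F" "\<forall>e\<in>{e1}. k e = ((\<lambda>_. 0)(e1 := 1)) e"
    using charged_tree_grow[OF assms(1,2,4)] e1(2,3) by blast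
  moreover have "induced_edges E V = E"
    by (rule induced_edges_vertices[OF assms(1)])
  ultimately show ?thesis
    unfolding charged_tree_def spanning_tree_def by (intro exI[of _ F] exI[of _ k]) auto
qed

end
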